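(* Assume Hypotheses 1 and 2 (see context). For any $x_1=(a_1,z_1),x_2=(a_2,z_2)\in U$ and $t_0>0$, if $x_2\in\mathcal{C}(x_1)$, $\Phi([0,t_0],x_1)\subset U$ and $\Phi([0,t_0],x_2)\subset U$, then, writing $\Phi(t,x_i)=(\tilde a_i(t),\tilde z_i(t))$, we have $\|\tilde a_2(t)-\tilde a_1(t)\|\ge\|a_2-a_1\|e^{c_1t}$ for all $t\in[0,t_0]$.
   Context: System $\dot a=f(a,z)$, $\dot z=g(a,z)$, $(a,z)\in\mathbb{R}^n\times\mathbb{R}^m$, $x=(a,z)$, $X=\mathbb{R}^n\times\mathbb{R}^m$, with flow $\Phi(t,x)$; Euclidean inner product, norm, operator norm. $\mathcal{L}(x_1,x_2)=\|a_2-a_1\|^2-\|z_2-z_1\|^2$; $\mathcal{C}(x)=\{x'\in X:\mathcal{L}(x',x)\ge0\}$; $\mathbb{B}_d(x)=\{(a',z'):\|a'-a\|\le d,\|z'-z\|\le d\}$. Hypothesis 1: $U$ is open and convex, and there is $d>0$ with $\mathcal{C}(x)\cap U\subset\mathbb{B}_d(x)$ for all $x\in U$. Hypothesis 2: $f,g$ are $C^1$ on $U$; there exist a continuous positive $\alpha:U\to\mathbb{R}$, a continuous nonnegative $\ell:U\to\mathbb{R}$ and $c_1>0$ with, for all $x\in U$: $\langle a',D_af(x)a'\rangle\ge\alpha(x)\|a'\|^2$ for all $a'$; $\langle z',D_zg(x)z'\rangle\le\ell(x)\|z'\|^2$ for all $z'$; $\alpha(x)\ge\ell(x)+\|D_zf(x)\|+\|D_ag(x)\|+c_1$.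 *)

theory Defs
  imports "HOL-Analysis.Analysis"
begin

definition Lfun :: "((real^'n) \<times> (real^'m)) \<Rightarrow> ((real^'n) \<times> (real^'m)) \<Rightarrow> real" where
  "Lfun x1 x2 = (norm (fst x2 - fst x1))\<^sup>2 - (norm (snd x2 - snd x1))\<^sup>2"

definition cone :: "((real^'n) \<times> (real^'m)) \<Rightarrow> ((real^'n) \<times> (real^'m)) set" where
  "cone x = {x'. Lfun x' x \<ge> 0}"

definition boxB :: "real \<Rightarrow> ((real^'n) \<times> (real^'m)) \<Rightarrow> ((real^'n) \<times> (real^'m)) set" where
  "boxB d x = {x'. norm (fst x' - fst x) \<le> d \<and> norm (snd x' - snd x) \<le> d}"

definition is_traj ::
  "(((real^'n) \<times> (real^'m)) \<Rightarrow> real^'n) \<Rightarrow> (((real^'n) \<times> (real^'m)) \<Rightarrow> real^'m)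
   \<Rightarrow> real \<Rightarrow> ((real^'n) \<times> (real^'m)) \<Rightarrow> (real \<Rightarrow> (real^'n) \<times> (real^'m)) \<Rightarrow> bool" where
  "is_traj f g t0 x0 y \<longleftrightarrow> y 0 = x0 \<and>
     (\<forall>t\<in>{0..t0}. (y has_vector_derivative (f (y t), g (y t))) (at t within {0..t0}))"

end

theory Submission
  imports Defs
begin

(*
  Let w(t) = y2(t) - y1(t) = (A(t), Z(t)) be the gap between the two
  trajectories, N = |A|^2 and L = |A|^2 - |Z|^2 (so L(0) >= 0 is the cone condition).
  By the mean value theorem on the segment between y1(t) and y2(t) (contained in U by
  convexity), the time derivatives of N and L are twice the linearised quantities
  <A, Df x (A,Z)> and <A, Df x (A,Z)> - <Z, Dg x (A,Z)> at some point x of that segment.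
  Hypothesis 2 bounds these from below:
    (i)  L' >= 2 (c1 N + min 0 (M L)), where M bounds alpha along all segments;
    (ii) N' >= 2 c1 N as long as |Z| <= |A|.
  From (i), L' >= 2 M L whenever L < 0, so L can never become negative (the cone is
  forward invariant); then (ii) holds throughout and a Gronwall comparison gives
  N(t) >= N(0) exp(2 c1 t), i.e. |A(t)| >= |A(0)| exp(c1 t).
*)

text \<open>Gronwall-type comparison: if \<open>N' \<ge> k N\<close> on \<open>(a, b)\<close>, then \<open>N(t) e^{-kt}\<close> is
  non-decreasing, so \<open>N\<close> grows at least like \<open>e^{kt}\<close>.\<close>

lemma exp_growth_compare:
  fixes N N' :: "real \<Rightarrow> real"
  assumes ab: "a \<le> b" and cont: "continuous_on {a..b} N"
    and der: "\<And>t. a < t \<Longrightarrow> t < b \<Longrightarrow> (N has_real_derivative N' t) (at t)"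
    and grow: "\<And>t. a < t \<Longrightarrow> t < b \<Longrightarrow> N' t \<ge> k * N t"
  shows "N a * exp (k * (b - a)) \<le> N b"
proof -
  have "N a * exp (- k * a) \<le> N b * exp (- k * b)"
  proof (rule DERIV_nonneg_imp_increasing_open[OF ab])
    fix t assume t: "a < t" "t < b"
    have "((\<lambda>t. N t * exp (- k * t)) has_real_derivative (N' t - k * N t) * exp (- k * t)) (at t)"
      using der[OF t] by (auto intro!: derivative_eq_intros simp: algebra_simps)
    moreover have "(N' t - k * N t) * exp (- k * t) \<ge> 0" using grow[OF t] by simp
    ultimately show "\<exists>y. ((\<lambda>t. N t * exp (- k * t)) has_real_derivative y) (at t) \<and> 0 \<le> y" by blast
  qed (use cont in \<open>auto intro!: continuous_intros\<close>)
  then have "N a * exp (- k * a) * exp (k * b) \<le> N b * exp (- k * b) * exp (k * b)"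
    by (rule mult_right_mono) simp
  then show ?thesis by (simp add: mult.assoc right_diff_distrib flip: exp_add)
qed

text \<open>A function that starts non-negative and satisfies \<open>L' \<ge> K L\<close> wherever it is negative
  stays non-negative: after the last zero before a negative value, the comparison lemma
  would force that value to be non-negative.\<close>

lemma nonneg_persists:
  fixes L L' :: "real \<Rightarrow> real"
  assumes cont: "continuous_on {0..T} L" and L0: "L 0 \<ge> 0"
    and der: "\<And>u. 0 < u \<Longrightarrow> u < T \<Longrightarrow> (L has_real_derivative L' u) (at u)"
    and neg: "\<And>u. 0 < u \<Longrightarrow> u < T \<Longrightarrow> L u < 0 \<Longrightarrow> L' u \<ge> K * L u"
    and t: "t \<in> {0..T}"
  shows "L t \<ge> 0"
proof (rule ccontr)
  assume Lt: "\<not> L t \<ge> 0"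
  define S where "S = {0..t} \<inter> L -` {0..}"
  define s where "s = Sup S"
  have "closed S"
    unfolding S_def using cont t by (intro continuous_closed_preimage) (auto intro: continuous_on_subset)
  moreover have "0 \<in> S" using L0 t by (auto simp: S_def)
  moreover have bdd: "bdd_above S" unfolding S_def by (auto intro: bdd_aboveI[of _ t])
  ultimately have "s \<in> S" unfolding s_def using closed_contains_Sup by blast
  then have s: "0 \<le> s" "s < t" "L s \<ge> 0" using Lt by (auto simp: S_def order_le_less)
  have after_s: "L u < 0" if "s < u" "u \<le> t" for u
    using cSup_upper[OF _ bdd, of u] that s by (force simp: S_def s_def)
  have "L s * exp (K * (t - s)) \<le> L t"
  proof (rule exp_growth_compare[where N' = L'])
    show "continuous_on {s..t} L" using cont s t by (auto intro: continuous_on_subset)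
  qed (use s t der neg after_s in auto)
  then show False using Lt s(3) by (meson exp_ge_zero mult_nonneg_nonneg order_trans)
qed

lemma mvt_inner_segment:
  fixes F :: "'a::real_normed_vector \<Rightarrow> 'b::real_inner"
  assumes der: "\<forall>x\<in>closed_segment p q. (F has_derivative DF x) (at x)"
  shows "\<exists>x\<in>closed_segment p q. inner c (F q - F p) = inner c (DF x (q - p))"
proof -
  define \<gamma> where "\<gamma> s = (1 - s) *\<^sub>R p + s *\<^sub>R q" for s :: real
  have on_seg: "\<gamma> s \<in> closed_segment p q" if "s \<in> {0..1}" for s
    using that unfolding \<gamma>_def in_segment by auto
  have "((\<lambda>s. inner c (F (\<gamma> s))) has_derivative (\<lambda>h. inner c (DF (\<gamma> s) (h *\<^sub>R (q - p)))))
          (at s within {0..1})" if "0 \<le> s" "s \<le> 1" for s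
  proof -
    have "(\<gamma> has_derivative (\<lambda>h. h *\<^sub>R (q - p))) (at s within {0..1})"
      unfolding \<gamma>_def by (auto intro!: derivative_eq_intros simp: algebra_simps)
    moreover have "(F has_derivative DF (\<gamma> s)) (at (\<gamma> s) within \<gamma> ` {0..1})"
      using der on_seg that by (auto intro: has_derivative_at_withinI)
    ultimately have "((F \<circ> \<gamma>) has_derivative (DF (\<gamma> s) \<circ> (\<lambda>h. h *\<^sub>R (q - p)))) (at s within {0..1})"
      by (rule diff_chain_within)
    from has_derivative_inner_right[OF this, of c] show ?thesis
      by (simp add: o_def)
  qed
  from mvt_very_simple[OF zero_le_one this] obtain s where
    "s \<in> {0..1}" "inner c (F (\<gamma> 1)) - inner c (F (\<gamma> 0)) = inner c (DF (\<gamma> s) ((1 - 0) *\<^sub>R (q - p)))"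
    by blast
  then show ?thesis using on_seg by (auto simp: \<gamma>_def inner_diff_right)
qed

lemma blinfun_partial_bounds:
  fixes D :: "('a::real_normed_vector \<times> 'b::real_normed_vector) \<Rightarrow>\<^sub>L 'c::real_normed_vector"
  shows "norm (D (a, 0)) \<le> onorm (\<lambda>a'. D (a', 0)) * norm a" "onorm (\<lambda>a'. D (a', 0)) \<ge> 0"
    and "norm (D (0, z)) \<le> onorm (\<lambda>z'. D (0, z')) * norm z" "onorm (\<lambda>z'. D (0, z')) \<ge> 0"
proof -
  have "bounded_linear (\<lambda>a'. D (a', 0))" "bounded_linear (\<lambda>z'. D (0, z'))"
    by (auto intro!: bounded_linear_compose[OF blinfun.bounded_linear_right]
        bounded_linear_Pair bounded_linear_zero bounded_linear_ident)
  then show "norm (D (a, 0)) \<le> onorm (\<lambda>a'. D (a', 0)) * norm a" "onorm (\<lambda>a'. D (a', 0)) \<ge> 0"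
    and "norm (D (0, z)) \<le> onorm (\<lambda>z'. D (0, z')) * norm z" "onorm (\<lambda>z'. D (0, z')) \<ge> 0"
    by (auto intro: onorm onorm_pos_le)
qed

text \<open>Splitting \<open>(a, z) = (a, 0) + (0, z)\<close>: the off-diagonal blocks contribute at most
  operator norm times \<open>|a| |z|\<close> to the quadratic forms.\<close>

lemma blinfun_cross_terms:
  fixes D :: "('a::real_inner \<times> 'b::real_inner) \<Rightarrow>\<^sub>L 'a" and G :: "('a \<times> 'b) \<Rightarrow>\<^sub>L 'b"
  shows "inner a (D (a, z)) \<ge> inner a (D (a, 0)) - onorm (\<lambda>z'. D (0, z')) * norm a * norm z"
    and "inner z (G (a, z)) \<le> inner z (G (0, z)) + onorm (\<lambda>a'. G (a', 0)) * norm a * norm z"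
proof -
  have split: "(a, z) = (a, 0) + (0, z)" by simp
  have "\<bar>inner a (D (0, z))\<bar> \<le> norm a * (onorm (\<lambda>z'. D (0, z')) * norm z)"
    using Cauchy_Schwarz_ineq2[of a "D (0, z)"] blinfun_partial_bounds(3)[of D z]
    by (meson mult_left_mono norm_ge_zero order_trans)
  then show "inner a (D (a, z)) \<ge> inner a (D (a, 0)) - onorm (\<lambda>z'. D (0, z')) * norm a * norm z"
    by (subst split, simp only: blinfun.add_right inner_add_right) (simp add: algebra_simps abs_le_iff)
  have "\<bar>inner z (G (a, 0))\<bar> \<le> norm z * (onorm (\<lambda>a'. G (a', 0)) * norm a)"
    using Cauchy_Schwarz_ineq2[of z "G (a, 0)"] blinfun_partial_bounds(1)[of G a]
    by (meson mult_left_mono norm_ge_zero order_trans)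
  then show "inner z (G (a, z)) \<le> inner z (G (0, z)) + onorm (\<lambda>a'. G (a', 0)) * norm a * norm z"
    by (subst split, simp only: blinfun.add_right inner_add_right) (simp add: algebra_simps abs_le_iff)
qed

lemma cone_quadratic_bound:
  fixes al el p q c A Z M :: real
  assumes "al \<ge> el + p + q + c" "el \<ge> 0" "p \<ge> 0" "q \<ge> 0" "c \<ge> 0" "A \<ge> 0" "Z \<ge> 0" "al \<le> M"
  shows "al * A\<^sup>2 - p * A * Z - q * A * Z - el * Z\<^sup>2 \<ge> c * A\<^sup>2 + min 0 (M * (A\<^sup>2 - Z\<^sup>2))"
proof (cases "Z \<le> A")
  case True
  have "p * A * Z \<le> p * A * A" "q * A * Z \<le> q * A * A" "el * Z\<^sup>2 \<le> el * A\<^sup>2"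
    using True assms by (auto intro!: mult_left_mono power_mono)
  moreover have "al * A\<^sup>2 \<ge> (el + p + q + c) * A\<^sup>2" using assms by (intro mult_right_mono) auto
  ultimately show ?thesis by (simp add: power2_eq_square algebra_simps)
next
  case False
  have "p * A * Z \<le> p * Z * Z" "q * A * Z \<le> q * Z * Z"
    using False assms by (auto intro!: mult_left_mono mult_right_mono)
  moreover have "al * A\<^sup>2 \<ge> (el + p + q + c) * A\<^sup>2" using assms by (intro mult_right_mono) auto
  moreover have "(el + p + q) * (A\<^sup>2 - Z\<^sup>2) \<ge> M * (A\<^sup>2 - Z\<^sup>2)"
    using False assms by (intro mult_right_mono_neg) (auto simp: power_mono)
  ultimately show ?thesis by (simp add: power2_eq_square algebra_simps)
qed

lemma linearized_bounds:
  fixes D :: "('a::real_inner \<times> 'b::real_inner) \<Rightarrow>\<^sub>L 'a" and G :: "('a \<times> 'b) \<Rightarrow>\<^sub>L 'b"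
  assumes Ha: "\<forall>a'. inner a' (D (a', 0)) \<ge> al * (norm a')\<^sup>2"
    and Hz: "\<forall>z'. inner z' (G (0, z')) \<le> el * (norm z')\<^sup>2"
    and ineq: "al \<ge> el + onorm (\<lambda>z'. D (0, z')) + onorm (\<lambda>a'. G (a', 0)) + c"
    and el: "el \<ge> 0" and c: "c \<ge> 0"
  shows "al \<le> M \<Longrightarrow> inner a (D (a, z)) - inner z (G (a, z))
           \<ge> c * (norm a)\<^sup>2 + min 0 (M * ((norm a)\<^sup>2 - (norm z)\<^sup>2))"
    and "norm z \<le> norm a \<Longrightarrow> inner a (D (a, z)) \<ge> c * (norm a)\<^sup>2"
proof -
  let ?p = "onorm (\<lambda>z'. D (0, z'))" and ?q = "onorm (\<lambda>a'. G (a', 0))"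
  have p: "?p \<ge> 0" and q: "?q \<ge> 0" using blinfun_partial_bounds by blast+
  have "inner a (D (a, 0)) \<ge> al * (norm a)\<^sup>2" "inner z (G (0, z)) \<le> el * (norm z)\<^sup>2"
    using Ha Hz by blast+
  then have Da: "inner a (D (a, z)) \<ge> al * (norm a)\<^sup>2 - ?p * norm a * norm z"
    and Gz: "inner z (G (a, z)) \<le> el * (norm z)\<^sup>2 + ?q * norm a * norm z"
    using blinfun_cross_terms(1)[of a D z] blinfun_cross_terms(2)[of z G a] by linarith+
  show "inner a (D (a, z)) - inner z (G (a, z)) \<ge> c * (norm a)\<^sup>2 + min 0 (M * ((norm a)\<^sup>2 - (norm z)\<^sup>2))"
    if "al \<le> M"
    using cone_quadratic_bound[OF ineq el p q c norm_ge_zero[of a] norm_ge_zero[of z] that] Da Gz by linarith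
  show "inner a (D (a, z)) \<ge> c * (norm a)\<^sup>2" if "norm z \<le> norm a"
  proof -
    have "?p * norm a * norm z \<le> ?p * norm a * norm a"
      using that p by (intro mult_left_mono) auto
    moreover have "al * (norm a)\<^sup>2 \<ge> (?p + c) * (norm a)\<^sup>2"
      using ineq el q by (intro mult_right_mono) auto
    ultimately show ?thesis using Da by (simp add: power2_eq_square algebra_simps)
  qed
qed

lemma field_increment_bounds:
  fixes f :: "'a::real_inner \<times> 'b::real_inner \<Rightarrow> 'a" and g :: "'a \<times> 'b \<Rightarrow> 'b"
    and Df :: "'a \<times> 'b \<Rightarrow> ('a \<times> 'b) \<Rightarrow>\<^sub>L 'a" and Dg :: "'a \<times> 'b \<Rightarrow> ('a \<times> 'b) \<Rightarrow>\<^sub>L 'b"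
  assumes seg: "closed_segment p q \<subseteq> U"
    and Df: "\<forall>x\<in>U. (f has_derivative blinfun_apply (Df x)) (at x)"
    and Dg: "\<forall>x\<in>U. (g has_derivative blinfun_apply (Dg x)) (at x)"
    and ell_nonneg: "\<forall>x\<in>U. ell x \<ge> 0" and c1: "c1 \<ge> 0"
    and H2_a: "\<forall>x\<in>U. \<forall>a'. inner a' (Df x (a', 0)) \<ge> alpha x * (norm a')\<^sup>2"
    and H2_z: "\<forall>x\<in>U. \<forall>z'. inner z' (Dg x (0, z')) \<le> ell x * (norm z')\<^sup>2"
    and H2_ineq: "\<forall>x\<in>U. alpha x \<ge> ell x + onorm (\<lambda>z'. Df x (0, z')) + onorm (\<lambda>a'. Dg x (a', 0)) + c1"
  defines "a \<equiv> fst q - fst p" and "z \<equiv> snd q - snd p"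
  shows "(\<forall>x\<in>closed_segment p q. alpha x \<le> M) \<Longrightarrow>
           inner a (f q - f p) - inner z (g q - g p) \<ge> c1 * (norm a)\<^sup>2 + min 0 (M * ((norm a)\<^sup>2 - (norm z)\<^sup>2))"
    and "norm z \<le> norm a \<Longrightarrow> inner a (f q - f p) \<ge> c1 * (norm a)\<^sup>2"
proof -
  have qp: "q - p = (a, z)" by (simp add: a_def z_def prod_eq_iff)
  have bounds: "alpha x \<le> M \<Longrightarrow> inner a (Df x (a, z)) - inner z (Dg x (a, z))
                   \<ge> c1 * (norm a)\<^sup>2 + min 0 (M * ((norm a)\<^sup>2 - (norm z)\<^sup>2))"
    "norm z \<le> norm a \<Longrightarrow> inner a (Df x (a, z)) \<ge> c1 * (norm a)\<^sup>2" if "x \<in> U" for x M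
    using linearized_bounds[where D = "Df x" and G = "Dg x" and al = "alpha x" and el = "ell x"]
      H2_a H2_z H2_ineq ell_nonneg c1 that by blast+
  show "inner a (f q - f p) - inner z (g q - g p) \<ge> c1 * (norm a)\<^sup>2 + min 0 (M * ((norm a)\<^sup>2 - (norm z)\<^sup>2))"
    if M: "\<forall>x\<in>closed_segment p q. alpha x \<le> M"
  proof -
    have "\<forall>x\<in>closed_segment p q. ((\<lambda>x. (f x, g x)) has_derivative (\<lambda>h. (Df x h, Dg x h))) (at x)"
      using seg Df Dg by (auto intro!: has_derivative_Pair)
    from mvt_inner_segment[OF this, of "(a, - z)"] obtain x where x: "x \<in> closed_segment p q"
      and "inner a (f q - f p) - inner z (g q - g p) = inner a (Df x (a, z)) - inner z (Dg x (a, z))"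
      by (auto simp: qp)
    moreover have "x \<in> U" using seg x by blast
    ultimately show ?thesis using bounds(1)[of x M] M x by simp
  qed
  show "inner a (f q - f p) \<ge> c1 * (norm a)\<^sup>2" if "norm z \<le> norm a"
  proof -
    have "\<forall>x\<in>closed_segment p q. (f has_derivative Df x) (at x)" using seg Df by blast
    from mvt_inner_segment[OF this, of a] obtain x where x: "x \<in> closed_segment p q"
      and "inner a (f q - f p) = inner a (Df x (a, z))"
      unfolding qp by blast
    moreover have "x \<in> U" using seg x by blast
    ultimately show ?thesis using bounds(2)[of x] that by simp
  qed
qed

lemma has_real_derivative_norm_sq:
  fixes w :: "real \<Rightarrow> 'a::real_normed_vector" and P :: "'a \<Rightarrow> 'b::real_inner"
  assumes P: "bounded_linear P" and w: "(w has_vector_derivative v) (at t)"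
  shows "((\<lambda>t. (norm (P (w t)))\<^sup>2) has_real_derivative 2 * inner (P (w t)) (P v)) (at t)"
proof -
  have "((\<lambda>t. P (w t)) has_vector_derivative P v) (at t)"
    using bounded_linear.has_vector_derivative[OF P w] .
  then have "((\<lambda>t. inner (P (w t)) (P (w t))) has_derivative
               (\<lambda>h. inner (P (w t)) (h *\<^sub>R P v) + inner (h *\<^sub>R P v) (P (w t)))) (at t)"
    unfolding has_vector_derivative_def by (auto intro!: derivative_eq_intros)
  then show ?thesis
    by (simp add: has_field_derivative_def power2_norm_eq_inner inner_commute algebra_simps mult_commute_abs)
qed

lemma segments_bounded_above:
  fixes y1 y2 :: "real \<Rightarrow> 'a::real_normed_vector" and h :: "'a \<Rightarrow> real"
  assumes "compact S" "continuous_on S y1" "continuous_on S y2"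
    and "y1 ` S \<subseteq> U" "y2 ` S \<subseteq> U" "convex U" "continuous_on U h"
  obtains M where "M \<ge> 0" "\<And>t x. t \<in> S \<Longrightarrow> x \<in> closed_segment (y1 t) (y2 t) \<Longrightarrow> h x \<le> M"
proof -
  define K where "K = (\<lambda>p. (1 - snd p) *\<^sub>R y1 (fst p) + snd p *\<^sub>R y2 (fst p)) ` (S \<times> {0..1::real})"
  have seg_K: "closed_segment (y1 t) (y2 t) \<subseteq> K" if "t \<in> S" for t
    using that unfolding K_def closed_segment_image_interval by (auto intro!: image_eqI[where x="(t, _)"])
  have "continuous_on (S \<times> {0..1}) (\<lambda>p. y1 (fst p))" "continuous_on (S \<times> {0..1}) (\<lambda>p. y2 (fst p))"
    by (auto intro: continuous_on_compose2[OF assms(2) continuous_on_fst]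
                    continuous_on_compose2[OF assms(3) continuous_on_fst])
  then have "compact K"
    unfolding K_def using assms(1)
    by (intro compact_continuous_image compact_Times) (auto intro!: continuous_intros)
  moreover have "K \<subseteq> U"
    using assms(4-6) unfolding K_def by (force intro: convexD_alt)
  ultimately have "bounded (h ` K)"
    using assms(7) by (meson compact_continuous_image compact_imp_bounded continuous_on_subset)
  then obtain B where "\<forall>x\<in>K. \<bar>h x\<bar> \<le> B" by (auto simp: bounded_real)
  with seg_K show ?thesis by (intro that[of "max B 0"]) force+
qed

lemma is_traj_continuous:
  assumes "is_traj f g t0 x0 y"
  shows "continuous_on {0..t0} y"
  using assms unfolding is_traj_def continuous_on_eq_continuous_within
  by (blast intro: has_vector_derivative_continuous)

lemma is_traj_gap_derivative:
  assumes traj1: "is_traj f g t0 x1 y1" and traj2: "is_traj f g t0 x2 y2" and t: "0 < t" "t < t0"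
  shows "((\<lambda>t. y2 t - y1 t) has_vector_derivative (f (y2 t) - f (y1 t), g (y2 t) - g (y1 t))) (at t)"
proof -
  have "(y1 has_vector_derivative (f (y1 t), g (y1 t))) (at t)"
    and "(y2 has_vector_derivative (f (y2 t), g (y2 t))) (at t)"
    using traj1 traj2 t unfolding is_traj_def at_within_Icc_at[OF t, symmetric] by auto
  from has_vector_derivative_diff[OF this(2,1)] show ?thesis by simp
qed

theorem lemma2p2:
  fixes f :: "(real^'n) \<times> (real^'m) \<Rightarrow> real^'n"
    and g :: "(real^'n) \<times> (real^'m) \<Rightarrow> real^'m"
    and Df :: "(real^'n) \<times> (real^'m) \<Rightarrow> ((real^'n) \<times> (real^'m)) \<Rightarrow>\<^sub>L (real^'n)"
    and Dg :: "(real^'n) \<times> (real^'m) \<Rightarrow> ((real^'n) \<times> (real^'m)) \<Rightarrow>\<^sub>L (real^'m)"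
    and U :: "((real^'n) \<times> (real^'m)) set"
    and alpha ell :: "(real^'n) \<times> (real^'m) \<Rightarrow> real"
    and c1 d t0 :: real
    and x1 x2 :: "(real^'n) \<times> (real^'m)"
    and y1 y2 :: "real \<Rightarrow> (real^'n) \<times> (real^'m)"
  assumes H1_open: "open U" and H1_convex: "convex U"
    and H1_d: "d > 0" and H1_cone: "\<forall>x\<in>U. cone x \<inter> U \<subseteq> boxB d x"
    and Df: "\<forall>x\<in>U. (f has_derivative blinfun_apply (Df x)) (at x)"
    and Df_cont: "continuous_on U Df"
    and Dg: "\<forall>x\<in>U. (g has_derivative blinfun_apply (Dg x)) (at x)"
    and Dg_cont: "continuous_on U Dg"
    and alpha_cont: "continuous_on U alpha" and alpha_pos: "\<forall>x\<in>U. alpha x > 0"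
    and ell_cont: "continuous_on U ell" and ell_nonneg: "\<forall>x\<in>U. ell x \<ge> 0"
    and c1_pos: "c1 > 0"
    and H2_a: "\<forall>x\<in>U. \<forall>a'. inner a' (Df x (a', 0)) \<ge> alpha x * (norm a')\<^sup>2"
    and H2_z: "\<forall>x\<in>U. \<forall>z'. inner z' (Dg x (0, z')) \<le> ell x * (norm z')\<^sup>2"
    and H2_ineq: "\<forall>x\<in>U. alpha x \<ge> ell x + onorm (\<lambda>z'. Df x (0, z')) + onorm (\<lambda>a'. Dg x (a', 0)) + c1"
    and x1U: "x1 \<in> U" and x2U: "x2 \<in> U" and t0_pos: "t0 > 0"
    and x2_cone: "x2 \<in> cone x1"
    and traj1: "is_traj f g t0 x1 y1" and traj1U: "y1 ` {0..t0} \<subseteq> U"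
    and traj2: "is_traj f g t0 x2 y2" and traj2U: "y2 ` {0..t0} \<subseteq> U"
  shows "\<forall>t\<in>{0..t0}. norm (fst (y2 t) - fst (y1 t)) \<ge> norm (fst x2 - fst x1) * exp (c1 * t)"
proof
  define a where "a t = fst (y2 t) - fst (y1 t)" for t
  define z where "z t = snd (y2 t) - snd (y1 t)" for t
  define N where "N t = (norm (a t))\<^sup>2" for t
  define L where "L t = (norm (a t))\<^sup>2 - (norm (z t))\<^sup>2" for t
  have cont: "continuous_on {0..t0} y1" "continuous_on {0..t0} y2"
    using is_traj_continuous[OF traj1] is_traj_continuous[OF traj2] .
  obtain M where "M \<ge> 0" and M: "\<And>t x. t \<in> {0..t0} \<Longrightarrow> x \<in> closed_segment (y1 t) (y2 t) \<Longrightarrow> alpha x \<le> M"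
    using segments_bounded_above[OF compact_Icc cont traj1U traj2U H1_convex alpha_cont] by blast
  have seg: "closed_segment (y1 t) (y2 t) \<subseteq> U" if "t \<in> {0..t0}" for t
    using that traj1U traj2U by (intro closed_segment_subset[OF _ _ H1_convex]) auto
  note increment = field_increment_bounds[OF seg Df Dg ell_nonneg less_imp_le[OF c1_pos] H2_a H2_z H2_ineq]
  note gap = is_traj_gap_derivative[OF traj1 traj2]
  have N_der: "(N has_real_derivative 2 * inner (a t) (f (y2 t) - f (y1 t))) (at t)"
    and L_der: "(L has_real_derivative 2 * inner (a t) (f (y2 t) - f (y1 t)) - 2 * inner (z t) (g (y2 t) - g (y1 t))) (at t)"
    if "0 < t" "t < t0" for t
    using has_real_derivative_norm_sq[OF bounded_linear_fst gap[OF that]]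
      DERIV_diff[OF has_real_derivative_norm_sq[OF bounded_linear_fst gap[OF that]]
                   has_real_derivative_norm_sq[OF bounded_linear_snd gap[OF that]]]
    unfolding N_def[abs_def] L_def[abs_def] a_def z_def by simp_all
  have L_nonneg: "L t \<ge> 0" if "t \<in> {0..t0}" for t
  proof (rule nonneg_persists[OF _ _ L_der _ that, where K = "2 * M"])
    show "continuous_on {0..t0} L" unfolding L_def a_def z_def using cont by (intro continuous_intros)
    show "L 0 \<ge> 0" using x2_cone traj1 traj2
      by (simp add: L_def a_def z_def cone_def Lfun_def is_traj_def norm_minus_commute)
    fix u assume u: "0 < u" "u < t0" "L u < 0"
    then have "M * L u \<le> 0" "c1 * (norm (a u))\<^sup>2 \<ge> 0"
      using \<open>M \<ge> 0\<close> c1_pos by (auto simp: mult_le_0_iff)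
    then show "2 * M * L u \<le> 2 * inner (a u) (f (y2 u) - f (y1 u)) - 2 * inner (z u) (g (y2 u) - g (y1 u))"
      using increment(1)[of u M] M[of u] u by (auto simp: a_def z_def L_def)
  qed
  fix t assume t: "t \<in> {0..t0}"
  have "N 0 * exp (2 * c1 * (t - 0)) \<le> N t"
  proof (rule exp_growth_compare[OF _ _ N_der])
    show "continuous_on {0..t} N" unfolding N_def a_def using cont t
      by (auto intro!: continuous_intros intro: continuous_on_subset)
    fix u assume u: "0 < u" "u < t"
    then have "norm (z u) \<le> norm (a u)" using L_nonneg[of u] t by (auto simp: L_def intro: power2_le_imp_le)
    then show "2 * inner (a u) (f (y2 u) - f (y1 u)) \<ge> 2 * c1 * N u"
      using increment(2)[of u] u t by (auto simp: a_def z_def N_def)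
  qed (use t in auto)
  then have "(norm (fst x2 - fst x1) * exp (c1 * t))\<^sup>2 \<le> (norm (a t))\<^sup>2"
    using traj1 traj2 by (simp add: N_def a_def is_traj_def power_mult_distrib mult.assoc flip: exp_double)
  then show "norm (fst (y2 t) - fst (y1 t)) \<ge> norm (fst x2 - fst x1) * exp (c1 * t)"
    unfolding a_def by (rule power2_le_imp_le) simp
qed

end
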